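(* Let $\rho\in L^1(\mathbb R^2)$, $\rho\ge0$, satisfy $\int_{\mathbb R^2}\rho\ln\rho\le C_0$, $\int_{\mathbb R^2}\rho=\beta$, $\int_{\mathbb R^2}|x|^2\rho\le C_0$, and define $u(x)=-\frac1{2\pi}\int_{\mathbb R^2}\ln|x-y|\rho(y)\,d^2y$ for $x\in\mathbb R^2$. Then there exist constants $C,R$ depending only on $C_0$ and $\beta$ such that $$\Big|u(x)+\frac{\beta}{2\pi}\ln|x|\Big|\le C\quad\text{for all }|x|>R.$$ *)

theory Defs
  imports "HOL-Analysis.Analysis"
begin

definition log_potential :: "(real^2 \<Rightarrow> real) \<Rightarrow> real^2 \<Rightarrow> real" where
  "log_potential \<rho> x = - (1 / (2 * pi)) * (\<integral>y. ln (norm (x - y)) * \<rho> y \<partial>lborel)"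

end

theory Submission
  imports Defs
begin

text \<open>Since \<open>\<integral> \<rho> = \<beta>\<close>, the quantity to bound is \<open>-(1/(2\<pi>)) \<integral> (ln |x - y| - ln |x|) \<rho>(y) dy\<close>.
  For \<open>|x| \<ge> 1\<close> the kernel is at most \<open>|y|\<close> plus the singularity \<open>-ln |x - y|\<close> near \<open>y = x\<close>;
  mass and second moment control the first part. Against the singularity, Young's inequality
  \<open>a b \<le> a ln a - a + exp b\<close> trades \<open>\<rho>\<close> for its entropy at the cost of
  \<open>\<integral>\<^bsub>|x - y| < 1\<^esub> dy / |x - y|\<close>, which is finite in the plane; the same inequality bounds the
  negative part of \<open>\<rho> ln \<rho>\<close> by the second moment and \<open>\<integral> exp (-|y|\<^sup>2) dy\<close>. Both integrals are
  bounded by summing over dyadic balls.\<close>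

lemma real_ex_power_ivl:
  fixes t :: real and b :: nat
  assumes "b \<ge> 2" "t \<ge> 1"
  shows "\<exists>n. b ^ n \<le> t \<and> t < b ^ Suc n"
proof -
  have "nat \<lfloor>t\<rfloor> \<ge> 1" using assms(2) by linarith
  then obtain n where n: "b ^ n \<le> nat \<lfloor>t\<rfloor>" "nat \<lfloor>t\<rfloor> < b ^ (n + 1)"
    using ex_power_ivl1[OF assms(1)] by blast
  have "real (b ^ n) \<le> t"
  proof -
    have "real (b ^ n) \<le> real (nat \<lfloor>t\<rfloor>)" using n(1) by (rule of_nat_mono)
    also have "\<dots> \<le> t" using assms(2) by linarith
    finally show ?thesis .
  qed
  moreover have "t < real (b ^ Suc n)"
  proof -
    have "nat \<lfloor>t\<rfloor> + 1 \<le> b ^ Suc n" using n(2) by simp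
    then have "real (nat \<lfloor>t\<rfloor> + 1) \<le> real (b ^ Suc n)" by (rule of_nat_mono)
    moreover have "t < real (nat \<lfloor>t\<rfloor>) + 1" using assms(2) by linarith
    ultimately show ?thesis by simp
  qed
  ultimately show ?thesis by auto
qed

lemma nn_integral_le_suminf_cball:
  fixes f :: "'a::euclidean_space \<Rightarrow> ennreal"
  assumes dominated: "\<And>y. \<exists>k. f y \<le> ennreal (c k) * indicator (cball z (r k)) y"
    and "\<And>k. 0 \<le> r k"
  shows "(\<integral>\<^sup>+y. f y \<partial>lborel) \<le> (\<Sum>k. ennreal (c k * unit_ball_vol DIM('a) * r k ^ DIM('a)))"
proof -
  have "f y \<le> (\<Sum>k. ennreal (c k) * indicator (cball z (r k)) y)" for y
  proof -
    obtain k where "f y \<le> ennreal (c k) * indicator (cball z (r k)) y" using dominated by blast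
    also have "\<dots> \<le> (\<Sum>k. ennreal (c k) * indicator (cball z (r k)) y)"
      using sum_le_suminf[OF summableI, of "{k}"] by simp
    finally show ?thesis .
  qed
  then have "(\<integral>\<^sup>+y. f y \<partial>lborel) \<le> (\<integral>\<^sup>+y. (\<Sum>k. ennreal (c k) * indicator (cball z (r k)) y) \<partial>lborel)"
    by (intro nn_integral_mono)
  also have "\<dots> = (\<Sum>k. \<integral>\<^sup>+y. ennreal (c k) * indicator (cball z (r k)) y \<partial>lborel)"
    by (rule nn_integral_suminf)
      (intro borel_measurable_times_ennreal borel_measurable_const borel_measurable_indicator, simp)
  also have "\<dots> = (\<Sum>k. ennreal (c k) * emeasure lborel (cball z (r k)))"
    by (intro suminf_cong nn_integral_cmult_indicator) simp
  also have "\<dots> = (\<Sum>k. ennreal (c k * unit_ball_vol DIM('a) * r k ^ DIM('a)))"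
    using assms(2) by (simp add: emeasure_cball ennreal_mult'' mult.assoc)
  finally show ?thesis .
qed

lemma suminf_ennreal_geometric:
  fixes c q :: real
  assumes "0 \<le> c" "0 \<le> q" "q < 1"
  shows "(\<Sum>k. ennreal (c * q ^ k)) = ennreal (c / (1 - q))"
proof -
  have "summable (\<lambda>k. c * q ^ k)" using assms by (intro summable_mult summable_geometric) simp
  then have "(\<Sum>k. ennreal (c * q ^ k)) = ennreal (\<Sum>k. c * q ^ k)"
    using assms by (intro suminf_ennreal2) auto
  also have "(\<Sum>k. c * q ^ k) = c / (1 - q)"
    using assms by (simp add: suminf_mult suminf_geometric)
  finally show ?thesis .
qed

lemma integrable_nonneg_nn_integral_le:
  fixes f :: "'a \<Rightarrow> real"
  assumes f: "f \<in> borel_measurable M" "\<And>y. 0 \<le> f y"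
    and le: "(\<integral>\<^sup>+y. ennreal (f y) \<partial>M) \<le> ennreal B" and B: "0 \<le> B"
  shows "integrable M f" and "integral\<^sup>L M f \<le> B"
proof -
  show "integrable M f"
    using f le by (intro integrableI_nonneg) (auto simp: le_less_trans)
  have "integral\<^sup>L M f = enn2real (\<integral>\<^sup>+y. ennreal (f y) \<partial>M)"
    using f by (intro integral_eq_nn_integral) auto
  also have "\<dots> \<le> B" using le B by (intro enn2real_leI)
  finally show "integral\<^sup>L M f \<le> B" .
qed

lemma nn_integral_inverse_dist_ball_le:
  fixes x :: "real^2"
  shows "(\<integral>\<^sup>+y. ennreal (indicator (ball x 1) y / norm (x - y)) \<partial>lborel) \<le> ennreal (4 * pi)"
proof -
  have "\<exists>k. ennreal (indicator (ball x 1) y / norm (x - y))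
      \<le> ennreal (2 ^ Suc k) * indicator (cball x ((1/2) ^ k)) y" for y
  proof (cases "y \<in> ball x 1 \<and> y \<noteq> x")
    case False
    then have "ennreal (indicator (ball x 1) y / norm (x - y)) = 0"
      by (auto simp: indicator_def)
    then show ?thesis by (intro exI[of _ 0]) (simp only: zero_le)
  next
    case True
    define d where "d = norm (x - y)"
    have d: "0 < d" "d < 1" using True by (auto simp: d_def dist_norm)
    obtain n where n: "2 ^ n \<le> 1 / d" "1 / d < 2 ^ Suc n"
      using real_ex_power_ivl[of 2 "1 / d"] d by auto
    have "d \<le> (1/2) ^ n" using n(1) d by (simp add: field_simps power_one_over)
    then have "y \<in> cball x ((1/2) ^ n)" by (simp add: dist_norm d_def)
    then show ?thesis
      using True n(2) by (intro exI[of _ n]) (simp add: d_def ennreal_leI)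
  qed
  then have "(\<integral>\<^sup>+y. ennreal (indicator (ball x 1) y / norm (x - y)) \<partial>lborel)
      \<le> (\<Sum>k. ennreal (2 ^ Suc k * unit_ball_vol DIM(real^2) * ((1/2) ^ k) ^ DIM(real^2)))"
    by (rule nn_integral_le_suminf_cball) simp
  also have "\<dots> = (\<Sum>k. ennreal (2 * pi * (1/2) ^ k))"
  proof (intro suminf_cong arg_cong[where f = ennreal])
    fix k :: nat
    have "(2::real) ^ k * (1/2) ^ k = 1" by (simp flip: power_mult_distrib)
    then show "2 ^ Suc k * unit_ball_vol DIM(real^2) * ((1/2) ^ k) ^ DIM(real^2)
        = 2 * pi * (1/2::real) ^ k"
      by (simp add: unit_ball_vol_2 power2_eq_square algebra_simps)
  qed
  also have "\<dots> = ennreal (4 * pi)" by (subst suminf_ennreal_geometric) auto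
  finally show ?thesis .
qed

lemma exp_neg_le_two_div_sq:
  fixes s :: real
  assumes "0 < s"
  shows "exp (- s) \<le> 2 / s\<^sup>2"
proof -
  have "s\<^sup>2 / 2 \<le> 1 + s + s\<^sup>2 / 2" using assms by simp
  also have "\<dots> \<le> exp s" using assms by (intro exp_lower_Taylor_quadratic) simp
  finally show ?thesis using assms by (simp add: exp_minus field_simps)
qed

lemma nn_integral_exp_neg_norm_sq_le:
  "(\<integral>\<^sup>+y. ennreal (exp (- (norm (y::real^2))\<^sup>2)) \<partial>lborel) \<le> ennreal (32 / 3 * pi)"
proof -
  have "\<exists>k. ennreal (exp (- (norm y)\<^sup>2))
      \<le> ennreal (2 / 16 ^ k) * indicator (cball (0::real^2) (2 ^ Suc k)) y" for y
  proof (cases "norm y < 1")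
    case True
    have "ennreal (exp (- (norm y)\<^sup>2)) \<le> ennreal 2"
      by (rule ennreal_leI, rule order_trans[of _ 1]) auto
    then show ?thesis using True by (intro exI[of _ 0]) simp
  next
    case False
    obtain n where n: "2 ^ n \<le> norm y" "norm y < 2 ^ Suc n"
      using real_ex_power_ivl[of 2 "norm y"] False by auto
    have "(16::real) ^ n = 2 ^ (4 * n)" by (simp add: power_mult)
    also have "\<dots> = ((2 ^ n)\<^sup>2)\<^sup>2" by (simp flip: power_mult add: ac_simps)
    also have "\<dots> \<le> ((norm y)\<^sup>2)\<^sup>2" using n(1) by (intro power_mono) auto
    finally have "2 / ((norm y)\<^sup>2)\<^sup>2 \<le> 2 / 16 ^ n"
      using False by (intro divide_left_mono mult_pos_pos) auto
    then have "exp (- (norm y)\<^sup>2) \<le> 2 / 16 ^ n"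
      using exp_neg_le_two_div_sq[of "(norm y)\<^sup>2"] False by force
    then show ?thesis using n(2) by (intro exI[of _ n]) (simp add: ennreal_leI)
  qed
  then have "(\<integral>\<^sup>+y. ennreal (exp (- (norm (y::real^2))\<^sup>2)) \<partial>lborel)
      \<le> (\<Sum>k. ennreal (2 / 16 ^ k * unit_ball_vol DIM(real^2) * (2 ^ Suc k) ^ DIM(real^2)))"
    by (rule nn_integral_le_suminf_cball) simp
  also have "\<dots> = (\<Sum>k. ennreal (8 * pi * (1/4) ^ k))"
  proof (intro suminf_cong arg_cong[where f = ennreal])
    fix k :: nat
    have "(16::real) ^ k = 4 ^ k * 4 ^ k" by (simp flip: power_mult_distrib)
    moreover have "((2::real) ^ Suc k)\<^sup>2 = 4 * 4 ^ k"
      by (simp add: power2_eq_square flip: power_mult_distrib)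
    ultimately show "2 / 16 ^ k * unit_ball_vol DIM(real^2) * (2 ^ Suc k) ^ DIM(real^2)
        = 8 * pi * (1/4::real) ^ k"
      by (simp del: power_Suc add: unit_ball_vol_2 power_one_over)
  qed
  also have "\<dots> = ennreal (32 / 3 * pi)" by (subst suminf_ennreal_geometric) auto
  finally show ?thesis .
qed

lemma mult_le_xlnx_add_exp:
  fixes a b :: real
  assumes "0 \<le> a"
  shows "a * b \<le> a * ln a - a + exp b"
proof (cases "a = 0")
  case False
  then have a: "0 < a" using assms by simp
  have "a * (1 + (b - ln a)) \<le> a * exp (b - ln a)"
    using a exp_ge_add_one_self[of "b - ln a"] by (intro mult_left_mono) auto
  also have "\<dots> = exp b" using a by (simp add: exp_diff)
  finally show ?thesis by (simp add: algebra_simps)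
qed simp

text \<open>At \<open>y = x\<close> the next two lemmas rely on the conventions \<open>ln 0 = 0\<close> and \<open>z / 0 = 0\<close>.\<close>

lemma abs_ln_norm_diff_le:
  fixes x y :: "'a::real_normed_vector"
  assumes x: "1 \<le> norm x"
  shows "\<bar>ln (norm (x - y)) - ln (norm x)\<bar>
    \<le> norm y + (if norm (x - y) < 1 then - ln (norm (x - y)) else 0)"
proof -
  define d where "d = norm (x - y)"
  have x0: "0 < norm x" using x by linarith
  have d_le: "d \<le> norm x + norm y" unfolding d_def by (rule norm_triangle_ineq4)
  have x_le: "norm x \<le> d + norm y" unfolding d_def using norm_triangle_ineq[of "x - y" y] by simp
  have upper: "ln d - ln (norm x) \<le> norm y"
  proof (cases "d = 0")
    case False
    then have d0: "0 < d" unfolding d_def by simp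
    have "ln d - ln (norm x) = ln (d / norm x)" using d0 x0 by (simp add: ln_div)
    also have "\<dots> \<le> d / norm x - 1" using d0 x0 by (intro ln_le_minus_one) simp
    also have "\<dots> = (d - norm x) / norm x" using x0 by (simp add: field_simps)
    also have "\<dots> \<le> norm y / norm x" using d_le x0 by (intro divide_right_mono) auto
    also have "\<dots> \<le> norm y" using x by (simp add: divide_le_eq mult_le_cancel_left1)
    finally show ?thesis .
  qed (use x in \<open>simp add: order_trans[OF _ norm_ge_zero]\<close>)
  have lower: "ln (norm x) - ln d \<le> norm y + (if d < 1 then - ln d else 0)"
  proof (cases "d < 1")
    case True
    have "ln (norm x) \<le> norm x - 1" using x0 by (rule ln_le_minus_one)
    then show ?thesis using True x_le by simp
  next
    case False
    then have d0: "0 < d" by simp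
    have "ln (norm x) - ln d = ln (norm x / d)" using d0 x0 by (simp add: ln_div)
    also have "\<dots> \<le> norm x / d - 1" using d0 x0 by (intro ln_le_minus_one) simp
    also have "\<dots> = (norm x - d) / d" using d0 by (simp add: field_simps)
    also have "\<dots> \<le> norm y / d" using x_le d0 by (intro divide_right_mono) auto
    also have "\<dots> \<le> norm y" using False by (simp add: divide_le_eq mult_le_cancel_left1)
    finally show ?thesis using False by simp
  qed
  have "0 \<le> (if d < 1 then - ln d else 0)" by (cases "d = 0") (auto simp: d_def)
  then show ?thesis using upper lower unfolding d_def by linarith
qed

lemma abs_ln_norm_diff_mult_le:
  fixes x y :: "'a::real_normed_vector" and a :: real
  assumes x: "1 \<le> norm x" and a: "0 \<le> a"
  shows "\<bar>(ln (norm (x - y)) - ln (norm x)) * a\<bar>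
    \<le> a + 2 * (a * (norm y)\<^sup>2) + a * ln a + exp (- (norm y)\<^sup>2)
      + indicator (ball x 1) y / norm (x - y)"
proof -
  define d where "d = norm (x - y)"
  define s where "s = (if d < 1 then - ln d else 0)"
  have "\<bar>(ln d - ln (norm x)) * a\<bar> = \<bar>ln d - ln (norm x)\<bar> * a" using a by (simp add: abs_mult)
  also have "\<dots> \<le> (norm y + s) * a"
    using abs_ln_norm_diff_le[OF x, of y] a unfolding d_def s_def by (rule mult_right_mono)
  finally have "\<bar>(ln d - ln (norm x)) * a\<bar> \<le> a * norm y + a * s" by (simp add: algebra_simps)
  moreover have "a * norm y \<le> a + a * (norm y)\<^sup>2"
  proof -
    have "0 \<le> (norm y - 1/2)\<^sup>2" by simp
    then have "norm y \<le> 1 + (norm y)\<^sup>2" by (simp add: power2_eq_square algebra_simps)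
    from mult_left_mono[OF this a] show ?thesis by (simp add: algebra_simps)
  qed
  moreover have "a * s \<le> max 0 (a * ln a) + indicator (ball x 1) y / d"
  proof (cases "0 < d \<and> d < 1")
    case True
    have "a * (- ln d) \<le> a * ln a - a + exp (- ln d)" using a by (rule mult_le_xlnx_add_exp)
    also have "exp (- ln d) = indicator (ball x 1) y / d"
      using True by (simp add: exp_minus inverse_eq_divide d_def dist_norm)
    finally show ?thesis using True a unfolding s_def by auto
  qed (auto simp: s_def d_def)
  moreover have "max 0 (a * ln a) \<le> a * ln a + a * (norm y)\<^sup>2 + exp (- (norm y)\<^sup>2)"
    using mult_le_xlnx_add_exp[OF a, of "- (norm y)\<^sup>2"] a by auto
  ultimately show ?thesis unfolding d_def by linarith
qed

lemma log_kernel_remainder_bound: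
  fixes \<rho> :: "real^2 \<Rightarrow> real" and x :: "real^2" and C\<^sub>0 :: real
  assumes \<rho>: "integrable lborel \<rho>" "\<And>y. 0 \<le> \<rho> y"
    and entropy: "integrable lborel (\<lambda>y. \<rho> y * ln (\<rho> y))" "(\<integral>y. \<rho> y * ln (\<rho> y) \<partial>lborel) \<le> C\<^sub>0"
    and moment: "(\<integral>\<^sup>+y. ennreal ((norm y)\<^sup>2 * \<rho> y) \<partial>lborel) \<le> ennreal C\<^sub>0"
    and x: "1 \<le> norm x"
  shows "integrable lborel (\<lambda>y. (ln (norm (x - y)) - ln (norm x)) * \<rho> y)"
    and "\<bar>\<integral>y. (ln (norm (x - y)) - ln (norm x)) * \<rho> y \<partial>lborel\<bar>
      \<le> (\<integral>y. \<rho> y \<partial>lborel) + 2 * max C\<^sub>0 0 + C\<^sub>0 + 32 / 3 * pi + 4 * pi"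
proof -
  have \<rho>_meas: "\<rho> \<in> borel_measurable lborel" using \<rho>(1) by (rule borel_measurable_integrable)
  have "(\<integral>\<^sup>+y. ennreal (\<rho> y * (norm y)\<^sup>2) \<partial>lborel) = (\<integral>\<^sup>+y. ennreal ((norm y)\<^sup>2 * \<rho> y) \<partial>lborel)"
    by (simp only: mult.commute)
  also have "\<dots> \<le> ennreal (max C\<^sub>0 0)"
    using moment by (rule order_trans) (rule ennreal_leI, simp)
  finally have moment_le: "(\<integral>\<^sup>+y. ennreal (\<rho> y * (norm y)\<^sup>2) \<partial>lborel) \<le> ennreal (max C\<^sub>0 0)" .
  have moment': "integrable lborel (\<lambda>y. \<rho> y * (norm y)\<^sup>2)"
      "(\<integral>y. \<rho> y * (norm y)\<^sup>2 \<partial>lborel) \<le> max C\<^sub>0 0"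
    using integrable_nonneg_nn_integral_le[OF _ _ moment_le] \<rho>_meas \<rho>(2) by auto
  have gauss: "integrable lborel (\<lambda>y::real^2. exp (- (norm y)\<^sup>2))"
      "(\<integral>y. exp (- (norm (y::real^2))\<^sup>2) \<partial>lborel) \<le> 32 / 3 * pi"
    using integrable_nonneg_nn_integral_le[OF _ _ nn_integral_exp_neg_norm_sq_le] by auto
  have singular_meas: "(\<lambda>y. indicator (ball x 1) y / norm (x - y)) \<in> borel_measurable lborel"
    by (intro borel_measurable_divide borel_measurable_indicator) auto
  have singular_nonneg: "0 \<le> indicator (ball x 1) y / norm (x - y)" for y :: "real^2"
    by simp
  have singular: "integrable lborel (\<lambda>y. indicator (ball x 1) y / norm (x - y))"
      "(\<integral>y. indicator (ball x 1) y / norm (x - y) \<partial>lborel) \<le> 4 * pi"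
    using integrable_nonneg_nn_integral_le[OF singular_meas singular_nonneg
        nn_integral_inverse_dist_ball_le[of x]] by simp_all
  define F where "F y = \<rho> y + 2 * (\<rho> y * (norm y)\<^sup>2) + \<rho> y * ln (\<rho> y)
    + exp (- (norm y)\<^sup>2) + indicator (ball x 1) y / norm (x - y)" for y
  have F_int: "integrable lborel F"
    unfolding F_def using \<rho>(1) moment'(1) entropy(1) gauss(1) singular(1)
    by (intro Bochner_Integration.integrable_add Bochner_Integration.integrable_mult_right) auto
  have "integral\<^sup>L lborel F = (\<integral>y. \<rho> y \<partial>lborel) + 2 * (\<integral>y. \<rho> y * (norm y)\<^sup>2 \<partial>lborel)
      + (\<integral>y. \<rho> y * ln (\<rho> y) \<partial>lborel) + (\<integral>y. exp (- (norm (y::real^2))\<^sup>2) \<partial>lborel)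
      + (\<integral>y. indicator (ball x 1) y / norm (x - y) \<partial>lborel)"
    unfolding F_def using \<rho>(1) moment'(1) entropy(1) gauss(1) singular(1)
    by (simp add: Bochner_Integration.integral_add Bochner_Integration.integrable_add
        Bochner_Integration.integrable_mult_right)
  then have F_le: "integral\<^sup>L lborel F \<le> (\<integral>y. \<rho> y \<partial>lborel) + 2 * max C\<^sub>0 0 + C\<^sub>0 + 32 / 3 * pi + 4 * pi"
    using moment'(2) entropy(2) gauss(2) singular(2) by linarith
  have dominated: "\<bar>(ln (norm (x - y)) - ln (norm x)) * \<rho> y\<bar> \<le> F y" for y
    unfolding F_def by (rule abs_ln_norm_diff_mult_le[OF x \<rho>(2)])
  have "(\<lambda>y. (ln (norm (x - y)) - ln (norm x)) * \<rho> y) \<in> borel_measurable lborel"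
    using \<rho>_meas by measurable
  then show L_int: "integrable lborel (\<lambda>y. (ln (norm (x - y)) - ln (norm x)) * \<rho> y)"
  proof (rule Bochner_Integration.integrable_bound[OF F_int], intro AE_I2)
    fix y
    show "norm ((ln (norm (x - y)) - ln (norm x)) * \<rho> y) \<le> norm (F y)"
      using dominated[of y] abs_ge_self[of "F y"] by simp
  qed
  show "\<bar>\<integral>y. (ln (norm (x - y)) - ln (norm x)) * \<rho> y \<partial>lborel\<bar>
      \<le> (\<integral>y. \<rho> y \<partial>lborel) + 2 * max C\<^sub>0 0 + C\<^sub>0 + 32 / 3 * pi + 4 * pi"
    using integral_abs_bound_integral[OF L_int F_int] dominated F_le by force
qed

lemma log_potential_add_ln_norm:
  fixes \<rho> :: "real^2 \<Rightarrow> real" and x :: "real^2"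
  assumes "integrable lborel \<rho>"
    and "integrable lborel (\<lambda>y. (ln (norm (x - y)) - ln (norm x)) * \<rho> y)"
  shows "log_potential \<rho> x + (\<integral>y. \<rho> y \<partial>lborel) / (2 * pi) * ln (norm x)
    = - (\<integral>y. (ln (norm (x - y)) - ln (norm x)) * \<rho> y \<partial>lborel) / (2 * pi)"
proof -
  have "(\<lambda>y. ln (norm (x - y)) * \<rho> y)
      = (\<lambda>y. (ln (norm (x - y)) - ln (norm x)) * \<rho> y + ln (norm x) * \<rho> y)"
    by (auto simp: algebra_simps)
  then have "(\<integral>y. ln (norm (x - y)) * \<rho> y \<partial>lborel)
      = (\<integral>y. (ln (norm (x - y)) - ln (norm x)) * \<rho> y \<partial>lborel) + ln (norm x) * (\<integral>y. \<rho> y \<partial>lborel)"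
    using assms by simp
  then show ?thesis unfolding log_potential_def by (simp add: field_simps)
qed

theorem lemma5:
  fixes C\<^sub>0 \<beta> :: real
  shows "\<exists>C R. \<forall>\<rho> :: real^2 \<Rightarrow> real.
      integrable lborel \<rho> \<and> (\<forall>y. \<rho> y \<ge> 0)
      \<and> integrable lborel (\<lambda>y. \<rho> y * ln (\<rho> y))
      \<and> (\<integral>y. \<rho> y * ln (\<rho> y) \<partial>lborel) \<le> C\<^sub>0
      \<and> (\<integral>y. \<rho> y \<partial>lborel) = \<beta>
      \<and> (\<integral>\<^sup>+ y. ennreal ((norm y)\<^sup>2 * \<rho> y) \<partial>lborel) \<le> ennreal C\<^sub>0
      \<longrightarrow> (\<forall>x. norm x > R \<longrightarrow>
             \<bar>log_potential \<rho> x + \<beta> / (2 * pi) * ln (norm x)\<bar> \<le> C)"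
proof (rule exI[of _ "(\<beta> + 2 * max C\<^sub>0 0 + C\<^sub>0 + 32 / 3 * pi + 4 * pi) / (2 * pi)"],
    rule exI[of _ 1], intro allI impI, elim conjE)
  fix \<rho> :: "real^2 \<Rightarrow> real" and x :: "real^2"
  assume \<rho>: "integrable lborel \<rho>" "\<forall>y. 0 \<le> \<rho> y"
    and entropy: "integrable lborel (\<lambda>y. \<rho> y * ln (\<rho> y))" "(\<integral>y. \<rho> y * ln (\<rho> y) \<partial>lborel) \<le> C\<^sub>0"
    and mass: "(\<integral>y. \<rho> y \<partial>lborel) = \<beta>"
    and moment: "(\<integral>\<^sup>+y. ennreal ((norm y)\<^sup>2 * \<rho> y) \<partial>lborel) \<le> ennreal C\<^sub>0"
    and x: "1 < norm x"
  note remainder = log_kernel_remainder_bound[OF \<rho>(1) _ entropy moment, of x]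
  show "\<bar>log_potential \<rho> x + \<beta> / (2 * pi) * ln (norm x)\<bar>
      \<le> (\<beta> + 2 * max C\<^sub>0 0 + C\<^sub>0 + 32 / 3 * pi + 4 * pi) / (2 * pi)"
    using log_potential_add_ln_norm[OF \<rho>(1) remainder(1)] remainder(2) \<rho>(2) x mass
    by (simp add: divide_right_mono)
qed

end
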